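(* Assume coarse consistency, coarse positivity and coarse time-varying conditional parallel trends (all defined in the context). Then the true coarse blip functions $\gamma^{c*}$ satisfy, for all $0\le m<k\le K$, almost surely on $\{T\ge m\}$, $$E[H^c_{mk}(\gamma^{c*})-H^c_{m,k-1}(\gamma^{c*})\mid T\ge m,A_m,\bar L_m]=E[H^c_{mk}(\gamma^{c*})-H^c_{m,k-1}(\gamma^{c*})\mid T>m,\bar L_m]. \qquad ( * )$$ Moreover, $\gamma^{c*}$ is the unique vector of functions with this property. If $\gamma^c=(\gamma^c_{mk}(\bar l_m,a_m))_{0\le m<k\le K}$ satisfies $( * )$ for all $0\le m<k\le K$, then $\gamma^c_{mk}(\bar L_m,A_m)=\gamma^{c*}_{mk}(\bar L_m,A_m)$ almost surely on $\{T=m\}$ for all $m<k$.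
   Context: **Data.** Subjects are observed at times $0,1,\dots,K$. At each time $m$ the data $(Z_m,Y_m,A_m)$ are collected in that temporal order: - $A_m$ is the treatment at time $m$, coded so that $0$ is the baseline level; - $Y_m$ is the outcome; - $Z_m$ are other covariates. For a time-varying variable $X$, write $\bar X_m=(X_0,\dots,X_m)$; negative-index variables are null. Define $\bar L_m=(\bar Z_m,\bar Y_{m-1},\bar A_{m-1})$. **Treatment initiation.** $T=\min\{m:A_m\neq 0\}\in\{0,\dots,K,\infty\}$, with $T=\infty$ if treatment is never initiated. **Counterfactuals.** $Y_k(m,a_m)$ is the counterfactual outcome at time $k$ under first initiating treatment at time $m$ at value $a_m$. $Y_k(\infty)$ is the counterfactual under never initiating. Also $Y_k(m,a_m)=Y_k(\infty)$ for $k\le m$. **Assumptions.** - Coarse consistency: $Y_k=Y_k(T,A_T)$ on $\{T<k\}$ and $Y_k=Y_k(\infty)$ on $\{T\ge k\}$. - Coarse positivity: for every $m$, $P(A_m=0\mid\bar L_m,T\ge m)>0$ (positive density at $0$) almost surely on $\{T\ge m\}$. - Coarse parallel trends: for all $m<k$, $$E[Y_k(\infty)-Y_{k-1}(\infty)\mid T=m,A_m,\bar L_m]=E[Y_k(\infty)-Y_{k-1}(\infty)\mid T>m,\bar L_m].$$ **Coarse blip functions.** $$\gamma^{c*}_{mk}(\bar l_m,a_m)\equiv E[Y_k(m,a_m)-Y_k(\infty)\mid T=m,A_m=a_m,\bar L_m=\bar l_m].$$ **Blipped-down outcomes.** - $H^c_{mk}(\gamma^c)\equiv Y_k-\sum_{j=m}^{k-1}\gamma^c_{jk}(\bar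 L_j,A_j)\mathbb 1\{T=j\}$ for $k>m$; - $H^c_{mm}(\gamma^c)\equiv Y_m$. *)

theory Defs
  imports "HOL-Probability.Probability"
begin

definition Tinit :: "nat \<Rightarrow> (nat \<Rightarrow> 'a \<Rightarrow> real) \<Rightarrow> 'a \<Rightarrow> enat" where
  "Tinit K A \<omega> = (if \<exists>m\<le>K. A m \<omega> \<noteq> 0 then enat (LEAST m. A m \<omega> \<noteq> 0) else \<infinity>)"

definition Lbar :: "(nat \<Rightarrow> 'a \<Rightarrow> 'z) \<Rightarrow> (nat \<Rightarrow> 'a \<Rightarrow> real) \<Rightarrow> (nat \<Rightarrow> 'a \<Rightarrow> real) \<Rightarrow> nat \<Rightarrow> 'a
     \<Rightarrow> (nat \<Rightarrow> 'z) \<times> (nat \<Rightarrow> real) \<times> (nat \<Rightarrow> real)" where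
  "Lbar Z Y A m \<omega> = (restrict (\<lambda>j. Z j \<omega>) {..m}, restrict (\<lambda>j. Y j \<omega>) {..<m}, restrict (\<lambda>j. A j \<omega>) {..<m})"

definition LM :: "'z measure \<Rightarrow> nat \<Rightarrow> ((nat \<Rightarrow> 'z) \<times> (nat \<Rightarrow> real) \<times> (nat \<Rightarrow> real)) measure" where
  "LM Mz m = (\<Pi>\<^sub>M j\<in>{..m}. Mz) \<Otimes>\<^sub>M ((\<Pi>\<^sub>M j\<in>{..<m}. (borel :: real measure)) \<Otimes>\<^sub>M (\<Pi>\<^sub>M j\<in>{..<m}. (borel :: real measure)))"

definition sigL :: "'a measure \<Rightarrow> 'z measure \<Rightarrow> (nat \<Rightarrow> 'a \<Rightarrow> 'z) \<Rightarrow> (nat \<Rightarrow> 'a \<Rightarrow> real) \<Rightarrow> (nat \<Rightarrow> 'a \<Rightarrow> real) \<Rightarrow> nat \<Rightarrow> 'a measure" where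
  "sigL M Mz Z Y A m = vimage_algebra (space M) (Lbar Z Y A m) (LM Mz m)"

definition sigLA :: "'a measure \<Rightarrow> 'z measure \<Rightarrow> (nat \<Rightarrow> 'a \<Rightarrow> 'z) \<Rightarrow> (nat \<Rightarrow> 'a \<Rightarrow> real) \<Rightarrow> (nat \<Rightarrow> 'a \<Rightarrow> real) \<Rightarrow> nat \<Rightarrow> 'a measure" where
  "sigLA M Mz Z Y A m = vimage_algebra (space M) (\<lambda>\<omega>. (Lbar Z Y A m \<omega>, A m \<omega>)) (LM Mz m \<Otimes>\<^sub>M borel)"

text \<open>On S it is the conditional expectation given S and F; evaluated anywhere it is the
  regression function of X on the F-variables within the subpopulation S.\<close>
definition condE_on :: "'a measure \<Rightarrow> 'a set \<Rightarrow> 'a measure \<Rightarrow> ('a \<Rightarrow> real) \<Rightarrow> 'a \<Rightarrow> real" where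
  "condE_on M S F X \<omega> = real_cond_exp M F (\<lambda>x. indicator S x * X x) \<omega> / real_cond_exp M F (indicator S) \<omega>"

text \<open>Blipped-down outcome H^c_{mk}(g) (for k = m the sum is empty, giving Y_m).\<close>
definition Hc :: "(nat \<Rightarrow> 'a \<Rightarrow> real) \<Rightarrow> (nat \<Rightarrow> 'a \<Rightarrow> real) \<Rightarrow> (nat \<Rightarrow> 'a \<Rightarrow> 'h) \<Rightarrow> ('a \<Rightarrow> enat)
     \<Rightarrow> (nat \<Rightarrow> nat \<Rightarrow> 'h \<times> real \<Rightarrow> real) \<Rightarrow> nat \<Rightarrow> nat \<Rightarrow> 'a \<Rightarrow> real" where
  "Hc Y A L T g m k \<omega> = Y k \<omega> - (\<Sum>j\<in>{m..<k}. g j k (L j \<omega>, A j \<omega>) * indicator {x. T x = enat j} \<omega>)"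

definition star_prop :: "'a measure \<Rightarrow> 'z measure \<Rightarrow> (nat \<Rightarrow> 'a \<Rightarrow> 'z) \<Rightarrow> (nat \<Rightarrow> 'a \<Rightarrow> real) \<Rightarrow> (nat \<Rightarrow> 'a \<Rightarrow> real)
     \<Rightarrow> ('a \<Rightarrow> enat) \<Rightarrow> (nat \<Rightarrow> nat \<Rightarrow> ((nat \<Rightarrow> 'z) \<times> (nat \<Rightarrow> real) \<times> (nat \<Rightarrow> real)) \<times> real \<Rightarrow> real)
     \<Rightarrow> nat \<Rightarrow> nat \<Rightarrow> bool" where
  "star_prop M Mz Z Y A T g m k =
     (AE \<omega> in M. T \<omega> \<ge> enat m \<longrightarrow>
        condE_on M {x. T x \<ge> enat m} (sigLA M Mz Z Y A m)
          (\<lambda>x. Hc Y A (Lbar Z Y A) T g m k x - Hc Y A (Lbar Z Y A) T g m (k - 1) x) \<omega>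
      = condE_on M {x. T x > enat m} (sigL M Mz Z Y A m)
          (\<lambda>x. Hc Y A (Lbar Z Y A) T g m k x - Hc Y A (Lbar Z Y A) T g m (k - 1) x) \<omega>)"

end

theory Submission
  imports Defs
begin

text \<open>
  Blipping down by the true blips turns the increment \<open>H\<^sup>c\<^sub>m\<^sub>k - H\<^sup>c\<^sub>m\<^sub>,\<^sub>k\<^sub>-\<^sub>1\<close>
  on \<open>{T \<ge> s}\<close> into the untreated increment \<open>Y\<^sub>k(\<infinity>) - Y\<^sub>k\<^sub>-\<^sub>1(\<infinity>)\<close> plus residuals
  \<open>1{T = j} (Y\<^sub>l(j, A\<^sub>j) - Y\<^sub>l(\<infinity>) - \<gamma>\<^sup>*\<^sub>j\<^sub>l)\<close> with \<open>j \<ge> s\<close>. Each residual has conditional mean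
  zero given \<open>(L\<^sub>j, A\<^sub>j)\<close>, hence given any coarser history, so \<open>(*)\<close> reduces to a statement about
  the untreated increment. On \<open>{T = m}\<close> that is parallel trends; on \<open>{T > m}\<close> we have \<open>A\<^sub>m = 0\<close>,
  so conditioning on \<open>(L\<^sub>m, A\<^sub>m)\<close> carries no more information than conditioning on \<open>L\<^sub>m\<close>,
  and positivity makes the normalisation by \<open>P(T > m | L\<^sub>m)\<close> legitimate.

  Uniqueness is by induction on \<open>k - m\<close>: if \<open>\<gamma>\<close> agrees with \<open>\<gamma>\<^sup>*\<close> at all shorter lags, the
  increments for \<open>\<gamma>\<close> and \<open>\<gamma>\<^sup>*\<close> differ only by \<open>(\<gamma>\<^sub>m\<^sub>k - \<gamma>\<^sup>*\<^sub>m\<^sub>k) 1{T = m}\<close>. This term vanishes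
  on \<open>{T > m}\<close> and is a function of \<open>(L\<^sub>m, A\<^sub>m)\<close>, so subtracting the two instances of \<open>(*)\<close>
  leaves exactly \<open>\<gamma>\<^sub>m\<^sub>k - \<gamma>\<^sup>*\<^sub>m\<^sub>k = 0\<close> on \<open>{T = m}\<close>.
\<close>

section \<open>Conditional expectations given an event\<close>

lemma integrable_bounded_mult:
  fixes X h :: "'a \<Rightarrow> real"
  assumes "integrable M X" "h \<in> borel_measurable M" "AE x in M. \<bar>h x\<bar> \<le> 1"
  shows "integrable M (\<lambda>x. h x * X x)"
proof (rule Bochner_Integration.integrable_bound[OF assms(1)])
  show "(\<lambda>x. h x * X x) \<in> borel_measurable M"
    using assms by measurable
  show "AE x in M. norm (h x * X x) \<le> norm (X x)"
    using assms(3) by eventually_elim (auto simp: abs_mult intro: mult_left_le_one_le)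
qed

lemma integrable_indicator_mult:
  fixes X :: "'a \<Rightarrow> real"
  assumes "integrable M X" "(indicator S :: 'a \<Rightarrow> real) \<in> borel_measurable M"
  shows "integrable M (\<lambda>x. indicator S x * X x)"
  by (rule integrable_bounded_mult[OF assms]) auto

lemma subalgebra_vimage_algebra:
  assumes "f \<in> measurable M N"
  shows "subalgebra M (vimage_algebra (space M) f N)"
proof -
  have "(\<lambda>x. x) \<in> measurable M (vimage_algebra (space M) f N)"
    by (rule measurable_vimage_algebra2) (use assms in auto)
  then have "B \<in> sets M" if "B \<in> sets (vimage_algebra (space M) f N)" for B
    using measurable_sets[OF _ that, of "\<lambda>x. x" M] sets.sets_into_space[OF that]
    by (simp add: Int_absorb2)
  then show ?thesis
    unfolding subalgebra_def by auto
qed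

definition cond_null :: "'a measure \<Rightarrow> 'a measure \<Rightarrow> ('a \<Rightarrow> real) \<Rightarrow> bool" where
  "cond_null M F N \<longleftrightarrow> integrable M N \<and> (AE x in M. real_cond_exp M F N x = 0)"

context sigma_finite_subalgebra
begin

lemma cond_null_diff:
  assumes "cond_null M F N" "cond_null M F N'"
  shows "cond_null M F (\<lambda>x. N x - N' x)"
proof -
  have N: "integrable M N" "integrable M N'"
    and N0: "AE x in M. real_cond_exp M F N x = 0" "AE x in M. real_cond_exp M F N' x = 0"
    using assms unfolding cond_null_def by auto
  have "AE x in M. real_cond_exp M F (\<lambda>x. N x - N' x) x = 0"
    using real_cond_exp_diff[OF N] N0 by eventually_elim simp
  with N show ?thesis
    unfolding cond_null_def by simp
qed

lemma cond_null_add: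
  assumes "cond_null M F N" "cond_null M F N'"
  shows "cond_null M F (\<lambda>x. N x + N' x)"
proof -
  have N: "integrable M N" "integrable M N'"
    and N0: "AE x in M. real_cond_exp M F N x = 0" "AE x in M. real_cond_exp M F N' x = 0"
    using assms unfolding cond_null_def by auto
  have "AE x in M. real_cond_exp M F (\<lambda>x. N x + N' x) x = 0"
    using real_cond_exp_add[OF N] N0 by eventually_elim simp
  with N show ?thesis
    unfolding cond_null_def by simp
qed

lemma cond_null_sum:
  assumes "\<And>i. i \<in> I \<Longrightarrow> cond_null M F (N i)"
  shows "cond_null M F (\<lambda>x. \<Sum>i\<in>I. N i x)"
  using assms
proof (induction I rule: infinite_finite_induct)
  case (insert i I)
  then have "cond_null M F (\<lambda>x. N i x + (\<Sum>i\<in>I. N i x))"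
    by (intro cond_null_add) auto
  then show ?case
    using insert by simp
qed (auto simp: cond_null_def)

lemma cond_null_cong:
  assumes "cond_null M F N" "\<And>x. x \<in> space M \<Longrightarrow> N x = N' x"
  shows "cond_null M F N'"
proof -
  have N: "integrable M N" "integrable M N'" and N0: "AE x in M. real_cond_exp M F N x = 0"
    using assms Bochner_Integration.integrable_cong[of M M N N'] unfolding cond_null_def by auto
  have "AE x in M. real_cond_exp M F N x = real_cond_exp M F N' x"
    by (rule real_cond_exp_cong) (use N assms(2) in auto)
  with N0 N show ?thesis
    unfolding cond_null_def by (auto elim: AE_mp)
qed

lemma cond_null_coarsen:
  assumes "subalgebra M G" "subalgebra G F" "cond_null M G N"
  shows "cond_null M F N"
proof -
  have N: "integrable M N" and G0: "AE x in M. real_cond_exp M G N x = 0"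
    using assms(3) unfolding cond_null_def by auto
  have "AE x in M. real_cond_exp M F (real_cond_exp M G N) x = real_cond_exp M F (\<lambda>x. 0) x"
    by (rule real_cond_exp_cong[OF G0]) auto
  moreover have "AE x in M. real_cond_exp M F (\<lambda>x. 0) x = 0"
    by (rule real_cond_exp_F_meas) auto
  moreover have "AE x in M. real_cond_exp M F (real_cond_exp M G N) x = real_cond_exp M F N x"
    by (rule real_cond_exp_nested_subalg[OF assms(1,2) N])
  ultimately have "AE x in M. real_cond_exp M F N x = 0"
    by eventually_elim simp
  with N show ?thesis
    unfolding cond_null_def by simp
qed

end

context finite_measure_subalgebra
begin

lemma integrable_indicator_real:
  "(indicator S :: 'a \<Rightarrow> real) \<in> borel_measurable M \<Longrightarrow> integrable M (indicator S :: 'a \<Rightarrow> real)"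
  using integrable_indicator_mult[of M "\<lambda>_. 1" S] by simp

lemma condE_on_eq_real_cond_exp:
  assumes S: "(indicator S :: 'a \<Rightarrow> real) \<in> borel_measurable F" and X: "integrable M X"
  shows "AE x in M. x \<in> S \<longrightarrow> condE_on M S F X x = real_cond_exp M F X x"
proof -
  have SM: "(indicator S :: 'a \<Rightarrow> real) \<in> borel_measurable M"
    using measurable_from_subalg[OF subalg S] .
  have "AE x in M. real_cond_exp M F (\<lambda>x. indicator S x * X x) x = indicator S x * real_cond_exp M F X x"
    by (rule real_cond_exp_mult[OF S]) (use X SM integrable_indicator_mult in auto)
  moreover have "AE x in M. real_cond_exp M F (indicator S) x = indicator S x"
    by (rule real_cond_exp_F_meas[OF integrable_indicator_real[OF SM] S])
  ultimately show ?thesis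
    by eventually_elim (simp add: condE_on_def)
qed

lemma condE_on_cong_AE:
  assumes S: "(indicator S :: 'a \<Rightarrow> real) \<in> borel_measurable M"
    and X: "X \<in> borel_measurable M" "X' \<in> borel_measurable M"
    and eq: "AE x in M. x \<in> S \<longrightarrow> X x = X' x"
  shows "AE x in M. condE_on M S F X x = condE_on M S F X' x"
proof -
  have "AE x in M. real_cond_exp M F (\<lambda>x. indicator S x * X x) x = real_cond_exp M F (\<lambda>x. indicator S x * X' x) x"
  proof (rule real_cond_exp_cong)
    show "AE x in M. indicator S x * X x = indicator S x * X' x"
      using eq by eventually_elim (simp add: indicator_def)
  qed (use S X in measurable)
  then show ?thesis
    by eventually_elim (simp add: condE_on_def)
qed

lemma condE_on_cong_null:
  assumes S: "(indicator S :: 'a \<Rightarrow> real) \<in> borel_measurable M"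
    and X: "integrable M X" "integrable M X'"
    and null: "cond_null M F (\<lambda>x. indicator S x * X x - indicator S x * X' x)"
  shows "AE x in M. condE_on M S F X x = condE_on M S F X' x"
proof -
  have "AE x in M. real_cond_exp M F (\<lambda>x. indicator S x * X x - indicator S x * X' x) x
      = real_cond_exp M F (\<lambda>x. indicator S x * X x) x - real_cond_exp M F (\<lambda>x. indicator S x * X' x) x"
    by (rule real_cond_exp_diff) (use S X integrable_indicator_mult in auto)
  moreover have "AE x in M. real_cond_exp M F (\<lambda>x. indicator S x * X x - indicator S x * X' x) x = 0"
    using null unfolding cond_null_def by simp
  ultimately show ?thesis
    by eventually_elim (simp add: condE_on_def)
qed

lemma condE_on_diff_measurable:
  assumes S: "(indicator S :: 'a \<Rightarrow> real) \<in> borel_measurable F"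
    and X: "integrable M X" "integrable M X'"
    and h: "integrable M h" "h \<in> borel_measurable F"
    and eq: "AE x in M. X x - X' x = h x"
  shows "AE x in M. x \<in> S \<longrightarrow> condE_on M S F X x - condE_on M S F X' x = h x"
proof -
  have "AE x in M. real_cond_exp M F (\<lambda>x. X x - X' x) x = real_cond_exp M F h x"
    by (rule real_cond_exp_cong[OF eq]) (use X h in auto)
  with real_cond_exp_diff[OF X] real_cond_exp_F_meas[OF h]
    condE_on_eq_real_cond_exp[OF S X(1)] condE_on_eq_real_cond_exp[OF S X(2)]
  show ?thesis
    by eventually_elim auto
qed

lemma integrable_indicator_mult_condE_on:
  assumes S: "(indicator S :: 'a \<Rightarrow> real) \<in> borel_measurable F" and X: "integrable M X"
    and h: "h \<in> borel_measurable M" and eq: "AE x in M. x \<in> S \<longrightarrow> h x = condE_on M S F X x"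
  shows "integrable M (\<lambda>x. indicator S x * h x)"
proof -
  have SM: "(indicator S :: 'a \<Rightarrow> real) \<in> borel_measurable M"
    using measurable_from_subalg[OF subalg S] .
  have "AE x in M. indicator S x * h x = indicator S x * real_cond_exp M F X x"
    using eq condE_on_eq_real_cond_exp[OF S X] by eventually_elim (simp add: indicator_def)
  moreover have "integrable M (\<lambda>x. indicator S x * real_cond_exp M F X x)"
    by (rule integrable_indicator_mult[OF real_cond_exp_int(1)[OF X] SM])
  ultimately show ?thesis
    using SM h by (subst integrable_cong_AE) auto
qed

lemma cond_null_indicator_mult_diff_condE_on:
  assumes S: "(indicator S :: 'a \<Rightarrow> real) \<in> borel_measurable F" and X: "integrable M X"
    and h: "h \<in> borel_measurable F" and eq: "AE x in M. x \<in> S \<longrightarrow> h x = condE_on M S F X x"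
  shows "cond_null M F (\<lambda>x. indicator S x * (X x - h x))"
proof -
  have SM: "(indicator S :: 'a \<Rightarrow> real) \<in> borel_measurable M"
    using measurable_from_subalg[OF subalg S] .
  have SX: "integrable M (\<lambda>x. indicator S x * X x)"
    by (rule integrable_indicator_mult[OF X SM])
  have Sh: "integrable M (\<lambda>x. indicator S x * h x)"
    by (rule integrable_indicator_mult_condE_on[OF S X measurable_from_subalg[OF subalg h] eq])
  have "AE x in M. real_cond_exp M F (\<lambda>x. indicator S x * X x) x = indicator S x * real_cond_exp M F X x"
    by (rule real_cond_exp_mult[OF S]) (use X SX in auto)
  moreover have "AE x in M. real_cond_exp M F (\<lambda>x. indicator S x * h x) x = indicator S x * h x"
    by (rule real_cond_exp_F_meas[OF Sh]) (use S h in measurable)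
  ultimately have "AE x in M. real_cond_exp M F (\<lambda>x. indicator S x * X x - indicator S x * h x) x = 0"
    using real_cond_exp_diff[OF SX Sh] eq condE_on_eq_real_cond_exp[OF S X]
    by eventually_elim (simp add: indicator_def)
  then show ?thesis
    using SX Sh unfolding cond_null_def by (simp add: right_diff_distrib)
qed

lemma real_cond_exp_indicator_bounded:
  assumes "(indicator S :: 'a \<Rightarrow> real) \<in> borel_measurable M"
  shows "AE x in M. \<bar>real_cond_exp M F (indicator S) x\<bar> \<le> 1"
proof -
  have "AE x in M. 0 \<le> real_cond_exp M F (indicator S) x" "AE x in M. real_cond_exp M F (indicator S) x \<le> 1"
    using integrable_indicator_real[OF assms] by (auto intro!: real_cond_exp_ge_c real_cond_exp_le_c)
  then show ?thesis
    by eventually_elim simp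
qed

lemma integral_indicator_mult_nested_cond_exp:
  assumes G: "subalgebra M G" "subalgebra G F"
    and S: "(indicator S :: 'a \<Rightarrow> real) \<in> borel_measurable G" and X: "integrable M X"
    and B: "B \<in> sets F"
  shows "(\<integral>x. indicator B x * indicator S x * real_cond_exp M F (indicator S) x * real_cond_exp M G X x \<partial>M)
       = (\<integral>x. indicator B x * indicator S x * real_cond_exp M F (\<lambda>x. indicator S x * X x) x \<partial>M)"
proof -
  interpret G: finite_measure_subalgebra M G
    using G(1) by unfold_locales
  define p where "p = real_cond_exp M F (indicator S)"
  define f where "f = real_cond_exp M F (\<lambda>x. indicator S x * X x)"
  have SM: "(indicator S :: 'a \<Rightarrow> real) \<in> borel_measurable M"
    using measurable_from_subalg[OF G(1) S] .
  have SX: "integrable M (\<lambda>x. indicator S x * X x)"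
    by (rule integrable_indicator_mult[OF X SM])
  have BM: "B \<in> sets M" and BG: "B \<in> sets G"
    using B G unfolding subalgebra_def by auto
  have pF: "p \<in> borel_measurable F" and pM: "p \<in> borel_measurable M" and fF: "f \<in> borel_measurable F"
    by (simp_all add: p_def f_def)
  note [measurable] = S SM BM BG B pF pM fF measurable_from_subalg[OF G(2) pF] borel_measurable_integrable[OF X]
  have p_mult_integrable: "integrable M (\<lambda>x. q x * p x * Z x)"
    if "integrable M Z" "q \<in> borel_measurable M" "\<And>x. \<bar>q x\<bar> \<le> 1" for q Z
  proof (rule integrable_bounded_mult[OF that(1)])
    show "(\<lambda>x. q x * p x) \<in> borel_measurable M"
      using that(2) pM by (rule borel_measurable_times)
    show "AE x in M. \<bar>q x * p x\<bar> \<le> 1"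
      using real_cond_exp_indicator_bounded[OF SM] unfolding p_def[symmetric]
      by eventually_elim (use that(3) in \<open>auto simp: abs_mult intro: mult_le_one\<close>)
  qed
  have "(\<integral>x. indicator B x * indicator S x * p x * real_cond_exp M G X x \<partial>M)
      = (\<integral>x. indicator B x * indicator S x * p x * X x \<partial>M)"
  proof (rule G.real_cond_exp_intg(2))
    show "integrable M (\<lambda>x. indicator B x * indicator S x * p x * X x)"
      by (rule p_mult_integrable[OF X borel_measurable_times[OF borel_measurable_indicator[OF BM] SM]])
        (simp split: split_indicator)
  qed measurable
  also have "\<dots> = (\<integral>x. (indicator B x * p x) * (indicator S x * X x) \<partial>M)"
    by (simp add: mult_ac)
  also have "\<dots> = (\<integral>x. (indicator B x * p x) * f x \<partial>M)"
    unfolding f_def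
  proof (rule real_cond_exp_intg(2)[symmetric])
    show "integrable M (\<lambda>x. indicator B x * p x * (indicator S x * X x))"
      by (rule p_mult_integrable[OF SX borel_measurable_indicator[OF BM]]) (simp split: split_indicator)
  qed measurable
  also have "\<dots> = (\<integral>x. (indicator B x * f x) * p x \<partial>M)"
    by (simp add: mult_ac)
  also have "\<dots> = (\<integral>x. (indicator B x * f x) * indicator S x \<partial>M)"
    unfolding p_def
  proof (rule real_cond_exp_intg(2))
    show "integrable M (\<lambda>x. indicator B x * f x * indicator S x)"
      using integrable_indicator_mult[OF integrable_indicator_mult[OF real_cond_exp_int(1)[OF SX] SM], of B]
      by (simp add: f_def mult_ac)
  qed auto
  finally show ?thesis
    by (simp add: p_def f_def mult_ac)
qed

text \<open>If every \<open>G\<close>-event agrees on \<open>S\<close> with an \<open>F\<close>-event, the previous identity extends from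
  \<open>F\<close>-events to \<open>G\<close>-events, and both sides are \<open>G\<close>-measurable.\<close>
lemma real_cond_exp_on_trace:
  assumes G: "subalgebra M G" "subalgebra G F"
    and S: "(indicator S :: 'a \<Rightarrow> real) \<in> borel_measurable G"
    and agree: "\<And>B. B \<in> sets G \<Longrightarrow> \<exists>B'\<in>sets F. \<forall>x\<in>space M. x \<in> S \<longrightarrow> (x \<in> B \<longleftrightarrow> x \<in> B')"
    and X: "integrable M X"
  shows "AE x in M. indicator S x * real_cond_exp M F (indicator S) x * real_cond_exp M G X x
           = indicator S x * real_cond_exp M F (\<lambda>x. indicator S x * X x) x"
    (is "AE x in M. ?h x = ?r x")
proof -
  interpret G: finite_measure_subalgebra M G
    using G(1) by unfold_locales
  have SM: "(indicator S :: 'a \<Rightarrow> real) \<in> borel_measurable M"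
    using measurable_from_subalg[OF G(1) S] .
  have SX: "integrable M (\<lambda>x. indicator S x * X x)"
    by (rule integrable_indicator_mult[OF X SM])
  have measurable: "?h \<in> borel_measurable G" "?r \<in> borel_measurable G"
    using S measurable_from_subalg[OF G(2) borel_measurable_cond_exp] by (auto intro!: borel_measurable_times)
  have integrable_h: "integrable M ?h"
  proof (rule integrable_bounded_mult[OF G.real_cond_exp_int(1)[OF X]])
    show "(\<lambda>x. indicator S x * real_cond_exp M F (indicator S) x) \<in> borel_measurable M"
      using SM by (rule borel_measurable_times) simp
    show "AE x in M. \<bar>indicator S x * real_cond_exp M F (indicator S) x\<bar> \<le> 1"
      using real_cond_exp_indicator_bounded[OF SM] by eventually_elim (simp add: abs_mult split: split_indicator)
  qed
  have integrable_r: "integrable M ?r"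
    by (rule integrable_indicator_mult[OF real_cond_exp_int(1)[OF SX] SM])
  have "AE x in M. real_cond_exp M G ?h x = ?r x"
  proof (rule G.real_cond_exp_charact[OF _ integrable_h integrable_r measurable(2)])
    fix B assume "B \<in> sets G"
    then obtain B' where B': "B' \<in> sets F" "\<forall>x\<in>space M. x \<in> S \<longrightarrow> (x \<in> B \<longleftrightarrow> x \<in> B')"
      using agree by blast
    have "(\<integral>x\<in>B. ?h x \<partial>M) = (\<integral>x. indicator B' x * ?h x \<partial>M)"
      unfolding set_lebesgue_integral_def
      by (rule Bochner_Integration.integral_cong) (use B' in \<open>auto split: split_indicator\<close>)
    also have "\<dots> = (\<integral>x. indicator B' x * ?r x \<partial>M)"
      using integral_indicator_mult_nested_cond_exp[OF G S X B'(1)] by (simp add: mult_ac)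
    also have "\<dots> = (\<integral>x\<in>B. ?r x \<partial>M)"
      unfolding set_lebesgue_integral_def
      by (rule Bochner_Integration.integral_cong) (use B' in \<open>auto split: split_indicator\<close>)
    finally show "(\<integral>x\<in>B. ?h x \<partial>M) = (\<integral>x\<in>B. ?r x \<partial>M)" .
  qed
  with G.real_cond_exp_F_meas[OF integrable_h measurable(1)] show ?thesis
    by eventually_elim (simp only:)
qed

lemma condE_on_eq_coarser:
  assumes G: "subalgebra M G" "subalgebra G F"
    and S: "(indicator S :: 'a \<Rightarrow> real) \<in> borel_measurable G"
    and agree: "\<And>B. B \<in> sets G \<Longrightarrow> \<exists>B'\<in>sets F. \<forall>x\<in>space M. x \<in> S \<longrightarrow> (x \<in> B \<longleftrightarrow> x \<in> B')"
    and X: "integrable M X"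
    and pos: "AE x in M. x \<in> S \<longrightarrow> real_cond_exp M F (indicator S) x \<noteq> 0"
  shows "AE x in M. x \<in> S \<longrightarrow> condE_on M S G X x = condE_on M S F X x"
proof -
  interpret G: finite_measure_subalgebra M G
    using G(1) by unfold_locales
  have "AE x in M. indicator S x * real_cond_exp M F (indicator S) x * real_cond_exp M G X x
           = indicator S x * real_cond_exp M F (\<lambda>x. indicator S x * X x) x"
    by (rule real_cond_exp_on_trace[OF G S _ X]) (rule agree)
  then show ?thesis
    using G.condE_on_eq_real_cond_exp[OF S X] pos
    by eventually_elim (auto simp: condE_on_def field_simps)
qed

end

section \<open>Initiation time and histories\<close>

type_synonym 'z history = "(nat \<Rightarrow> 'z) \<times> (nat \<Rightarrow> real) \<times> (nat \<Rightarrow> real)"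

locale initiation_process = prob_space M
  for M :: "'a measure" +
  fixes Mz :: "'z measure" and K :: nat
    and Z :: "nat \<Rightarrow> 'a \<Rightarrow> 'z" and Y A :: "nat \<Rightarrow> 'a \<Rightarrow> real" and T :: "'a \<Rightarrow> enat"
  assumes T_def: "T = Tinit K A"
    and Z_measurable: "\<And>m. m \<le> K \<Longrightarrow> Z m \<in> measurable M Mz"
    and A_measurable: "\<And>m. m \<le> K \<Longrightarrow> A m \<in> borel_measurable M"
    and Y_integrable: "\<And>k. k \<le> K \<Longrightarrow> integrable M (Y k)"
begin

abbreviation F :: "nat \<Rightarrow> 'a measure" where
  "F m \<equiv> sigL M Mz Z Y A m"

abbreviation G :: "nat \<Rightarrow> 'a measure" where
  "G m \<equiv> sigLA M Mz Z Y A m"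

abbreviation LA :: "nat \<Rightarrow> 'a \<Rightarrow> 'z history \<times> real" where
  "LA m \<equiv> \<lambda>x. (Lbar Z Y A m x, A m x)"

lemma T_eq_enat_iff: "T x = enat t \<longleftrightarrow> t \<le> K \<and> A t x \<noteq> 0 \<and> (\<forall>i<t. A i x = 0)"
proof
  assume "T x = enat t"
  then have ex: "\<exists>m\<le>K. A m x \<noteq> 0" and t: "t = (LEAST m. A m x \<noteq> 0)"
    unfolding T_def Tinit_def by (auto split: if_splits)
  then obtain m where m: "m \<le> K" "A m x \<noteq> 0"
    by auto
  have "A t x \<noteq> 0"
    using t m by (metis (mono_tags, lifting) LeastI)
  moreover have "t \<le> m"
    using t m by (simp add: Least_le)
  moreover have "\<forall>i<t. A i x = 0"
    using t not_less_Least by blast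
  ultimately show "t \<le> K \<and> A t x \<noteq> 0 \<and> (\<forall>i<t. A i x = 0)"
    using m by auto
next
  assume t: "t \<le> K \<and> A t x \<noteq> 0 \<and> (\<forall>i<t. A i x = 0)"
  then have "(LEAST m. A m x \<noteq> 0) = t"
    by (intro Least_equality) (auto simp: not_less[symmetric])
  then show "T x = enat t"
    using t unfolding T_def Tinit_def by auto
qed

lemma T_eq_infinity_iff: "T x = \<infinity> \<longleftrightarrow> (\<forall>i\<le>K. A i x = 0)"
  unfolding T_def Tinit_def by auto

lemma enat_le_T_iff:
  assumes "m \<le> K"
  shows "enat m \<le> T x \<longleftrightarrow> (\<forall>i<m. A i x = 0)"
proof (cases "T x")
  case (enat t)
  then have "A t x \<noteq> 0" "\<forall>i<t. A i x = 0"
    using T_eq_enat_iff by auto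
  then show ?thesis
    using enat by (auto simp: not_less[symmetric])
next
  case infinity
  moreover have "\<forall>i\<le>K. A i x = 0"
    using infinity T_eq_infinity_iff by auto
  ultimately show ?thesis
    using assms by auto
qed

lemma enat_less_T_iff:
  assumes "m \<le> K"
  shows "enat m < T x \<longleftrightarrow> (\<forall>i\<le>m. A i x = 0)"
proof (cases "T x")
  case (enat t)
  then have "A t x \<noteq> 0" "\<forall>i<t. A i x = 0"
    using T_eq_enat_iff by auto
  then show ?thesis
    using enat by (auto simp: not_less[symmetric] le_less)
next
  case infinity
  moreover have "\<forall>i\<le>K. A i x = 0"
    using infinity T_eq_infinity_iff by auto
  ultimately show ?thesis
    using assms by auto
qed

lemma sum_indicator_T_eq:
  fixes f :: "nat \<Rightarrow> real"
  assumes "finite I"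
  shows "(\<Sum>j\<in>I. f j * indicator {x. T x = enat j} x) = (if T x \<in> enat ` I then f (the_enat (T x)) else 0)"
proof (cases "T x \<in> enat ` I")
  case True
  then obtain t where t: "t \<in> I" "T x = enat t"
    by auto
  have "(\<Sum>j\<in>I. f j * indicator {x. T x = enat j} x) = (\<Sum>j\<in>I. if j = t then f j else 0)"
    by (rule sum.cong) (auto simp: t indicator_def)
  then show ?thesis
    using t assms by simp
next
  case False
  then show ?thesis
    by (auto intro!: sum.neutral simp: indicator_def)
qed

lemma Lbar_in_space: "m \<le> K \<Longrightarrow> x \<in> space M \<Longrightarrow> Lbar Z Y A m x \<in> space (LM Mz m)"
  unfolding Lbar_def LM_def space_pair_measure space_PiM
  using measurable_space[OF Z_measurable] by auto

lemma measurable_Lbar: "m \<le> K \<Longrightarrow> Lbar Z Y A m \<in> measurable M (LM Mz m)"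
proof -
  assume m: "m \<le> K"
  have "Lbar Z Y A m = (\<lambda>x. (restrict (\<lambda>j. Z j x) {..m}, restrict (\<lambda>j. Y j x) {..<m}, restrict (\<lambda>j. A j x) {..<m}))"
    by (auto simp: Lbar_def fun_eq_iff)
  also have "\<dots> \<in> measurable M (LM Mz m)"
    unfolding LM_def using m
    by (intro measurable_Pair measurable_restrict) (auto intro: Z_measurable A_measurable borel_measurable_integrable[OF Y_integrable])
  finally show ?thesis .
qed

lemma measurable_LA: "m \<le> K \<Longrightarrow> LA m \<in> measurable M (LM Mz m \<Otimes>\<^sub>M borel)"
  by (intro measurable_Pair measurable_Lbar A_measurable)

lemma measurable_Lbar_F: "m \<le> K \<Longrightarrow> Lbar Z Y A m \<in> measurable (F m) (LM Mz m)"
  unfolding sigL_def by (rule measurable_vimage_algebra1) (auto simp: Lbar_in_space)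

lemma measurable_LA_G: "m \<le> K \<Longrightarrow> LA m \<in> measurable (G m) (LM Mz m \<Otimes>\<^sub>M borel)"
  unfolding sigLA_def
  by (rule measurable_vimage_algebra1) (auto simp: space_pair_measure Lbar_in_space)

lemma subalgebra_F: "m \<le> K \<Longrightarrow> subalgebra M (F m)"
  unfolding sigL_def by (rule subalgebra_vimage_algebra[OF measurable_Lbar])

lemma subalgebra_G: "m \<le> K \<Longrightarrow> subalgebra M (G m)"
  unfolding sigLA_def by (rule subalgebra_vimage_algebra[OF measurable_LA])

lemma subalgebra_G_F: "m \<le> K \<Longrightarrow> subalgebra (G m) (F m)"
  using subalgebra_vimage_algebra[OF measurable_compose[OF measurable_LA_G measurable_fst]]
  by (simp add: sigL_def sigLA_def)

lemma measurable_LA_G_mono: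
  assumes mj: "m < j" "j \<le> K"
  shows "LA m \<in> measurable (G j) (LM Mz m \<Otimes>\<^sub>M borel)"
proof -
  define restr where "restr = (\<lambda>p :: 'z history \<times> real.
     ((restrict (fst (fst p)) {..m}, restrict (fst (snd (fst p))) {..<m}, restrict (snd (snd (fst p))) {..<m}),
      snd (snd (fst p)) m))"
  have [measurable]:
    "(\<lambda>f. restrict f {..m}) \<in> measurable (\<Pi>\<^sub>M i\<in>{..j}. Mz) (\<Pi>\<^sub>M i\<in>{..m}. Mz)"
    "(\<lambda>f. restrict f {..<m}) \<in> measurable (\<Pi>\<^sub>M i\<in>{..<j}. (borel::real measure)) (\<Pi>\<^sub>M i\<in>{..<m}. borel)"
    "(\<lambda>f. f m) \<in> measurable (\<Pi>\<^sub>M i\<in>{..<j}. (borel::real measure)) borel"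
    using mj by (auto intro!: measurable_restrict_subset measurable_component_singleton)
  have "restr \<in> measurable (LM Mz j \<Otimes>\<^sub>M borel) (LM Mz m \<Otimes>\<^sub>M borel)"
    unfolding restr_def LM_def by measurable
  moreover have "LA m x = restr (LA j x)" for x
    unfolding restr_def Lbar_def using mj by (auto simp: fun_eq_iff restrict_def)
  ultimately show ?thesis
    using measurable_compose[OF measurable_LA_G[OF mj(2)]] by simp
qed

lemma subalgebra_G_mono: "m \<le> j \<Longrightarrow> j \<le> K \<Longrightarrow> subalgebra (G j) (G m)"
  using subalgebra_vimage_algebra[OF measurable_LA_G_mono, of m j]
  by (cases "m = j") (auto simp: sigLA_def subalgebra_def)

lemma finite_measure_subalgebra_F: "m \<le> K \<Longrightarrow> finite_measure_subalgebra M (F m)"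
  using subalgebra_F by unfold_locales

lemma finite_measure_subalgebra_G: "m \<le> K \<Longrightarrow> finite_measure_subalgebra M (G m)"
  using subalgebra_G by unfold_locales

lemma indicator_T_eq_measurable_G:
  assumes "m \<le> K"
  shows "(indicator {x. T x = enat m} :: 'a \<Rightarrow> real) \<in> borel_measurable (G m)"
proof -
  define \<psi> where "\<psi> = (\<lambda>p :: 'z history \<times> real.
     if (\<forall>i\<in>{..<m}. snd (snd (fst p)) i = 0) \<and> snd p \<noteq> 0 then 1 else (0::real))"
  have "\<psi> \<in> borel_measurable (LM Mz m \<Otimes>\<^sub>M borel)"
    unfolding \<psi>_def LM_def by measurable
  then have "(\<lambda>x. \<psi> (LA m x)) \<in> borel_measurable (G m)"
    using measurable_compose[OF measurable_LA_G[OF assms]] by auto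
  moreover have "\<psi> (LA m x) = indicator {x. T x = enat m} x" for x
    using T_eq_enat_iff[of x m] assms by (auto simp: \<psi>_def Lbar_def indicator_def)
  ultimately show ?thesis
    by simp
qed

lemma indicator_less_T_measurable_G:
  assumes "m \<le> K"
  shows "(indicator {x. enat m < T x} :: 'a \<Rightarrow> real) \<in> borel_measurable (G m)"
proof -
  define \<psi> where "\<psi> = (\<lambda>p :: 'z history \<times> real.
     if (\<forall>i\<in>{..<m}. snd (snd (fst p)) i = 0) \<and> snd p = 0 then 1 else (0::real))"
  have "\<psi> \<in> borel_measurable (LM Mz m \<Otimes>\<^sub>M borel)"
    unfolding \<psi>_def LM_def by measurable
  then have "(\<lambda>x. \<psi> (LA m x)) \<in> borel_measurable (G m)"
    using measurable_compose[OF measurable_LA_G[OF assms]] by auto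
  moreover have "\<psi> (LA m x) = indicator {x. enat m < T x} x" for x
    using enat_less_T_iff[OF assms, of x] by (auto simp: \<psi>_def Lbar_def indicator_def le_less)
  ultimately show ?thesis
    by simp
qed

lemma indicator_le_T_measurable_F:
  assumes "m \<le> K"
  shows "(indicator {x. enat m \<le> T x} :: 'a \<Rightarrow> real) \<in> borel_measurable (F m)"
proof -
  define \<psi> where "\<psi> = (\<lambda>l :: 'z history. if (\<forall>i\<in>{..<m}. snd (snd l) i = 0) then 1 else (0::real))"
  have "\<psi> \<in> borel_measurable (LM Mz m)"
    unfolding \<psi>_def LM_def by measurable
  then have "(\<lambda>x. \<psi> (Lbar Z Y A m x)) \<in> borel_measurable (F m)"
    using measurable_compose[OF measurable_Lbar_F[OF assms]] by auto
  moreover have "\<psi> (Lbar Z Y A m x) = indicator {x. enat m \<le> T x} x" for x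
    using enat_le_T_iff[OF assms, of x] by (auto simp: \<psi>_def Lbar_def indicator_def)
  ultimately show ?thesis
    by simp
qed

lemma indicator_le_T_measurable_G: "m \<le> K \<Longrightarrow> (indicator {x. enat m \<le> T x} :: 'a \<Rightarrow> real) \<in> borel_measurable (G m)"
  using measurable_from_subalg[OF subalgebra_G_F indicator_le_T_measurable_F] .

text \<open>Before initiation \<open>A\<^sub>m = 0\<close>, so on \<open>{T > m}\<close> the variable \<open>A\<^sub>m\<close> adds nothing to \<open>L\<^sub>m\<close>.\<close>
lemma G_agrees_with_F_on_not_initiated:
  assumes m: "m \<le> K" and B: "B \<in> sets (G m)"
  shows "\<exists>B'\<in>sets (F m). \<forall>x\<in>space M. x \<in> {x. enat m < T x} \<longrightarrow> (x \<in> B \<longleftrightarrow> x \<in> B')"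
proof -
  have "LA m \<in> space M \<rightarrow> space (LM Mz m \<Otimes>\<^sub>M borel)"
    by (auto simp: space_pair_measure Lbar_in_space[OF m])
  then obtain C where C: "C \<in> sets (LM Mz m \<Otimes>\<^sub>M borel)" "B = LA m -` C \<inter> space M"
    using B unfolding sigLA_def by (auto simp: sets_vimage_algebra2)
  define C0 where "C0 = (\<lambda>l. (l, 0::real)) -` C \<inter> space (LM Mz m)"
  have "(\<lambda>l. (l, 0::real)) \<in> measurable (LM Mz m) (LM Mz m \<Otimes>\<^sub>M borel)"
    by measurable
  then have "C0 \<in> sets (LM Mz m)"
    unfolding C0_def using measurable_sets C(1) by blast
  then have "Lbar Z Y A m -` C0 \<inter> space M \<in> sets (F m)"
    unfolding sigL_def by (rule in_vimage_algebra)
  moreover have "x \<in> B \<longleftrightarrow> x \<in> Lbar Z Y A m -` C0 \<inter> space M" if "x \<in> space M" "enat m < T x" for x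
    using that enat_less_T_iff[OF m] Lbar_in_space[OF m] unfolding C C0_def by auto
  ultimately show ?thesis
    by blast
qed

definition regular_blip :: "(nat \<Rightarrow> nat \<Rightarrow> 'z history \<times> real \<Rightarrow> real) \<Rightarrow> bool" where
  "regular_blip g \<longleftrightarrow> (\<forall>m k. m < k \<longrightarrow> k \<le> K \<longrightarrow>
     g m k \<in> borel_measurable (LM Mz m \<Otimes>\<^sub>M borel) \<and>
     integrable M (\<lambda>\<omega>. g m k (Lbar Z Y A m \<omega>, A m \<omega>) * indicator {x. T x = enat m} \<omega>))"

lemma regular_blipD:
  assumes "regular_blip g" "m < k" "k \<le> K"
  shows "g m k \<in> borel_measurable (LM Mz m \<Otimes>\<^sub>M borel)"
    and "integrable M (\<lambda>x. g m k (LA m x) * indicator {x. T x = enat m} x)"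
  using assms unfolding regular_blip_def by auto

lemma measurable_regular_blip_G:
  assumes "regular_blip g" "m < k" "k \<le> K"
  shows "(\<lambda>x. g m k (LA m x)) \<in> borel_measurable (G m)"
  using measurable_compose[OF measurable_LA_G regular_blipD(1)[OF assms]] assms(2,3) by simp

abbreviation Hc_increment :: "(nat \<Rightarrow> nat \<Rightarrow> 'z history \<times> real \<Rightarrow> real) \<Rightarrow> nat \<Rightarrow> nat \<Rightarrow> 'a \<Rightarrow> real" where
  "Hc_increment g m k \<equiv> \<lambda>x. Hc Y A (Lbar Z Y A) T g m k x - Hc Y A (Lbar Z Y A) T g m (k - 1) x"

lemma integrable_Hc_increment:
  assumes "regular_blip g" "k \<le> K"
  shows "integrable M (Hc_increment g m k)"
  unfolding Hc_def using assms Y_integrable regular_blipD(2)[OF assms(1)]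
  by (intro Bochner_Integration.integrable_diff Bochner_Integration.integrable_sum) auto

lemma Hc_increment_diff:
  assumes mk: "m < k" "k \<le> K"
    and shorter: "\<And>j l. j < l \<Longrightarrow> l \<le> K \<Longrightarrow> l - j < k - m \<Longrightarrow>
                    AE x in M. T x = enat j \<longrightarrow> g j l (LA j x) = g' j l (LA j x)"
  shows "AE x in M. Hc_increment g m k x - Hc_increment g' m k x
                  = - ((g m k (LA m x) - g' m k (LA m x)) * indicator {x. T x = enat m} x)"
proof -
  define \<delta> where "\<delta> j l x = (g j l (LA j x) - g' j l (LA j x)) * indicator {x. T x = enat j} x" for j l x
  have \<delta>_shorter: "AE x in M. \<delta> j l x = 0" if "j < l" "l \<le> K" "l - j < k - m" for j l
    using shorter[OF that] by eventually_elim (auto simp: \<delta>_def)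
  have Hc_diff: "Hc Y A (Lbar Z Y A) T g m l x - Hc Y A (Lbar Z Y A) T g' m l x = - (\<Sum>j\<in>{m..<l}. \<delta> j l x)" for l x
    unfolding Hc_def \<delta>_def by (simp only: left_diff_distrib sum_subtractf)
  have "AE x in M. (\<forall>j\<in>{Suc m..<k}. \<delta> j k x = 0) \<and> (\<forall>j\<in>{m..<k-1}. \<delta> j (k-1) x = 0)"
    using mk by (intro eventually_conj eventually_ball_finite ballI \<delta>_shorter) auto
  then show ?thesis
  proof eventually_elim
    case (elim x)
    have "(\<Sum>j\<in>{m..<k}. \<delta> j k x) = \<delta> m k x + (\<Sum>j\<in>{Suc m..<k}. \<delta> j k x)"
      using mk by (intro sum.atLeast_Suc_lessThan)
    then have "Hc_increment g m k x - Hc_increment g' m k x = - \<delta> m k x"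
      using elim Hc_diff[of k x] Hc_diff[of "k - 1" x] by simp
    then show ?case
      unfolding \<delta>_def .
  qed
qed

lemma blip_eq_of_star_prop:
  assumes regular: "regular_blip g" "regular_blip g'"
    and star: "star_prop M Mz Z Y A T g m k" "star_prop M Mz Z Y A T g' m k"
    and mk: "m < k" "k \<le> K"
    and shorter: "\<And>j l. j < l \<Longrightarrow> l \<le> K \<Longrightarrow> l - j < k - m \<Longrightarrow>
                    AE x in M. T x = enat j \<longrightarrow> g j l (LA j x) = g' j l (LA j x)"
  shows "AE x in M. T x = enat m \<longrightarrow> g m k (LA m x) = g' m k (LA m x)"
proof -
  have mK: "m \<le> K"
    using mk by simp
  interpret Fm: finite_measure_subalgebra M "F m"
    by (rule finite_measure_subalgebra_F[OF mK])
  interpret Gm: finite_measure_subalgebra M "G m"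
    by (rule finite_measure_subalgebra_G[OF mK])
  define \<delta> where "\<delta> x = (g m k (LA m x) - g' m k (LA m x)) * indicator {x. T x = enat m} x" for x
  define St where "St = {x. enat m \<le> T x}"
  define Sg where "Sg = {x. enat m < T x}"
  have diff: "AE x in M. Hc_increment g m k x - Hc_increment g' m k x = - \<delta> x"
    unfolding \<delta>_def by (rule Hc_increment_diff[OF mk shorter])
  have \<delta>_integrable: "integrable M \<delta>"
    unfolding \<delta>_def left_diff_distrib using regular_blipD(2) regular mk by auto
  have "(\<lambda>x. g m k (LA m x)) \<in> borel_measurable (G m)" "(\<lambda>x. g' m k (LA m x)) \<in> borel_measurable (G m)"
    using measurable_regular_blip_G regular mk by auto
  then have \<delta>_measurable: "\<delta> \<in> borel_measurable (G m)"
    unfolding \<delta>_def[abs_def]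
    by (intro borel_measurable_times borel_measurable_diff indicator_T_eq_measurable_G[OF mK])
  have I: "integrable M (Hc_increment g m k)" "integrable M (Hc_increment g' m k)"
    using integrable_Hc_increment regular mk by auto
  have "AE x in M. x \<in> St \<longrightarrow> condE_on M St (G m) (Hc_increment g m k) x
                             - condE_on M St (G m) (Hc_increment g' m k) x = - \<delta> x"
    unfolding St_def
    by (rule Gm.condE_on_diff_measurable[OF indicator_le_T_measurable_G[OF mK] I _ _ diff])
      (use \<delta>_integrable \<delta>_measurable in \<open>auto intro: borel_measurable_uminus\<close>)
  moreover have "AE x in M. condE_on M Sg (F m) (Hc_increment g m k) x = condE_on M Sg (F m) (Hc_increment g' m k) x"
  proof (rule Fm.condE_on_cong_AE)
    show "AE x in M. x \<in> Sg \<longrightarrow> Hc_increment g m k x = Hc_increment g' m k x"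
      using diff by eventually_elim (auto simp: Sg_def \<delta>_def)
  qed (use I measurable_from_subalg[OF subalgebra_G indicator_less_T_measurable_G] mK in \<open>auto simp: Sg_def\<close>)
  ultimately show ?thesis
    using star unfolding star_prop_def St_def Sg_def
    by eventually_elim (auto simp: \<delta>_def)
qed

end

section \<open>Identification of the coarse blip functions\<close>

locale coarse_blip_model = initiation_process M Mz K Z Y A T
  for M :: "'a measure" and Mz :: "'z measure" and K Z Y A T +
  fixes Yinf :: "nat \<Rightarrow> 'a \<Rightarrow> real" and Ycf :: "nat \<Rightarrow> nat \<Rightarrow> real \<Rightarrow> 'a \<Rightarrow> real"
    and gstar :: "nat \<Rightarrow> nat \<Rightarrow> 'z history \<times> real \<Rightarrow> real"
  assumes Yinf_integrable: "\<And>k. k \<le> K \<Longrightarrow> integrable M (Yinf k)"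
    and Ycf_integrable: "\<And>m k. m < k \<Longrightarrow> k \<le> K \<Longrightarrow> integrable M (\<lambda>\<omega>. Ycf k m (A m \<omega>) \<omega>)"
    and consistency_initiated: "\<And>k \<omega>. k \<le> K \<Longrightarrow> \<omega> \<in> space M \<Longrightarrow> T \<omega> < enat k \<Longrightarrow>
                  Y k \<omega> = Ycf k (the_enat (T \<omega>)) (A (the_enat (T \<omega>)) \<omega>) \<omega>"
    and consistency_not_initiated: "\<And>k \<omega>. k \<le> K \<Longrightarrow> \<omega> \<in> space M \<Longrightarrow> T \<omega> \<ge> enat k \<Longrightarrow> Y k \<omega> = Yinf k \<omega>"
    and positivity: "\<And>m. m \<le> K \<Longrightarrow> AE \<omega> in M. T \<omega> \<ge> enat m \<longrightarrow>
                  condE_on M {x. T x \<ge> enat m} (F m) (indicator {x. A m x = 0}) \<omega> > 0"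
    and parallel_trends: "\<And>m k. m < k \<Longrightarrow> k \<le> K \<Longrightarrow> AE \<omega> in M. T \<omega> = enat m \<longrightarrow>
                  condE_on M {x. T x = enat m} (G m) (\<lambda>x. Yinf k x - Yinf (k - 1) x) \<omega>
                = condE_on M {x. T x > enat m} (F m) (\<lambda>x. Yinf k x - Yinf (k - 1) x) \<omega>"
    and gstar_measurable: "\<And>m k. m < k \<Longrightarrow> k \<le> K \<Longrightarrow> gstar m k \<in> borel_measurable (LM Mz m \<Otimes>\<^sub>M borel)"
    and gstar_blip: "\<And>m k. m < k \<Longrightarrow> k \<le> K \<Longrightarrow> AE \<omega> in M. T \<omega> = enat m \<longrightarrow>
                  gstar m k (LA m \<omega>) = condE_on M {x. T x = enat m} (G m) (\<lambda>x. Ycf k m (A m x) x - Yinf k x) \<omega>"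
begin

lemma cond_prob_not_initiated_pos:
  assumes m: "m \<le> K"
  shows "AE x in M. enat m \<le> T x \<longrightarrow> 0 < real_cond_exp M (F m) (indicator {x. enat m < T x}) x"
proof -
  interpret Fm: finite_measure_subalgebra M "F m"
    by (rule finite_measure_subalgebra_F[OF m])
  have St: "(indicator {x. enat m \<le> T x} :: 'a \<Rightarrow> real) \<in> borel_measurable (F m)"
    by (rule indicator_le_T_measurable_F[OF m])
  have "AE x in M. real_cond_exp M (F m) (indicator {x. enat m \<le> T x}) x = indicator {x. enat m \<le> T x} x"
    by (rule Fm.real_cond_exp_F_meas[OF Fm.integrable_indicator_real St])
      (rule measurable_from_subalg[OF subalgebra_F[OF m] St])
  moreover have not_initiated: "(\<lambda>x. indicator {x. enat m \<le> T x} x * indicator {x. A m x = 0} x)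
      = (indicator {x. enat m < T x} :: 'a \<Rightarrow> real)"
    using enat_le_T_iff[OF m] enat_less_T_iff[OF m] by (auto simp: fun_eq_iff indicator_def le_less)
  ultimately show ?thesis
    using positivity[OF m] by eventually_elim (simp add: condE_on_def not_initiated)
qed

lemma gstar_blip_on:
  "j < l \<Longrightarrow> l \<le> K \<Longrightarrow> AE x in M. x \<in> {x. T x = enat j} \<longrightarrow>
     gstar j l (LA j x) = condE_on M {x. T x = enat j} (G j) (\<lambda>x. Ycf l j (A j x) x - Yinf l x) x"
  using gstar_blip by simp

lemma integrable_gstar:
  assumes jl: "j < l" "l \<le> K"
  shows "integrable M (\<lambda>x. gstar j l (LA j x) * indicator {x. T x = enat j} x)"
proof -
  have j: "j \<le> K"
    using jl by simp
  interpret Gj: finite_measure_subalgebra M "G j"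
    by (rule finite_measure_subalgebra_G[OF j])
  have "integrable M (\<lambda>x. indicator {x. T x = enat j} x * gstar j l (LA j x))"
    using Yinf_integrable Ycf_integrable jl measurable_compose[OF measurable_LA[OF j] gstar_measurable[OF jl]]
    by (intro Gj.integrable_indicator_mult_condE_on[OF indicator_T_eq_measurable_G[OF j] _ _ gstar_blip_on[OF jl]])
      auto
  then show ?thesis
    by (simp add: mult.commute)
qed

lemma regular_blip_gstar: "regular_blip gstar"
  unfolding regular_blip_def using gstar_measurable integrable_gstar by auto

definition blip_residual :: "(nat \<Rightarrow> nat \<Rightarrow> 'z history \<times> real \<Rightarrow> real) \<Rightarrow> nat \<Rightarrow> nat \<Rightarrow> 'a \<Rightarrow> real" where
  "blip_residual g j l x = (Ycf l j (A j x) x - Yinf l x - g j l (LA j x)) * indicator {x. T x = enat j} x"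

lemma cond_null_blip_residual:
  assumes jl: "j < l" "l \<le> K"
  shows "cond_null M (G j) (blip_residual gstar j l)"
proof -
  have j: "j \<le> K"
    using jl by simp
  interpret Gj: finite_measure_subalgebra M "G j"
    by (rule finite_measure_subalgebra_G[OF j])
  have "cond_null M (G j) (\<lambda>x. indicator {x. T x = enat j} x * ((Ycf l j (A j x) x - Yinf l x) - gstar j l (LA j x)))"
    using Yinf_integrable Ycf_integrable jl measurable_compose[OF measurable_LA_G[OF j] gstar_measurable[OF jl]]
    by (intro Gj.cond_null_indicator_mult_diff_condE_on[OF indicator_T_eq_measurable_G[OF j] _ _ gstar_blip_on[OF jl]])
      auto
  then show ?thesis
    unfolding blip_residual_def[abs_def] by (simp add: mult.commute)
qed

lemma cond_null_blip_residual_sums: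
  assumes sk: "s \<le> k" "k \<le> K" and H: "subalgebra (G s) H"
  shows "cond_null M H (\<lambda>x. (\<Sum>j\<in>{s..<k}. blip_residual gstar j k x) - (\<Sum>j\<in>{s..<k - 1}. blip_residual gstar j (k - 1) x))"
proof -
  have s: "s \<le> K"
    using sk by simp
  have sub_H: "subalgebra (G j) H" if "s \<le> j" "j \<le> K" for j
    using H subalgebra_G_mono[OF that] unfolding subalgebra_def by auto
  have "subalgebra M H"
    using subalgebra_G[OF s] H unfolding subalgebra_def by auto
  then interpret H: finite_measure_subalgebra M H
    by unfold_locales
  have residual: "cond_null M H (blip_residual gstar j l)" if "s \<le> j" "j < l" "l \<le> K" for j l
    using that by (intro H.cond_null_coarsen[OF subalgebra_G sub_H cond_null_blip_residual]) simp_all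
  show ?thesis
    using sk by (intro H.cond_null_diff H.cond_null_sum residual) auto
qed

lemma indicator_mult_Hc_increment:
  assumes x: "x \<in> space M" and s: "m \<le> s" "s \<le> k" and mk: "m < k" "k \<le> K"
  shows "indicator {x. enat s \<le> T x} x * Hc_increment g m k x
       = indicator {x. enat s \<le> T x} x * (Yinf k x - Yinf (k - 1) x)
         + ((\<Sum>j\<in>{s..<k}. blip_residual g j k x) - (\<Sum>j\<in>{s..<k - 1}. blip_residual g j (k - 1) x))"
proof -
  have residuals: "(\<Sum>j\<in>{s..<l}. blip_residual g j l x)
      = (if T x \<in> enat ` {s..<l} then blip_residual g (the_enat (T x)) l x else 0)" for l
    unfolding blip_residual_def[abs_def]
    using sum_indicator_T_eq[of "{s..<l}" "\<lambda>j. Ycf l j (A j x) x - Yinf l x - g j l (LA j x)" x]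
    by (auto simp: indicator_def)
  have blips: "Hc Y A (Lbar Z Y A) T g m l x
      = Y l x - (if T x \<in> enat ` {m..<l} then g (the_enat (T x)) l (LA (the_enat (T x)) x) else 0)" for l
    unfolding Hc_def using sum_indicator_T_eq[of "{m..<l}" "\<lambda>j. g j l (LA j x)" x] by simp
  have "T x < enat s \<or> (\<exists>t. T x = enat t \<and> s \<le> t \<and> t < k) \<or> enat k \<le> T x"
    by (cases "T x") (auto simp: not_less)
  then consider (before) "T x < enat s" | (between) t where "T x = enat t" "s \<le> t" "t < k" | (after) "enat k \<le> T x"
    by blast
  then show ?thesis
  proof cases
    case before
    then show ?thesis
      by (auto simp: residuals indicator_def not_le)
  next
    case (between t)
    have Yk: "Y k x = Ycf k t (A t x) x"
      using consistency_initiated[OF mk(2) x] between by simp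
    have "Y (k - 1) x = (if t < k - 1 then Ycf (k - 1) t (A t x) x else Yinf (k - 1) x)"
      using consistency_initiated[of "k - 1" x] consistency_not_initiated[of "k - 1" x] mk x between by auto
    then show ?thesis
      using between s unfolding residuals blips Yk
      by (auto simp: image_iff indicator_def blip_residual_def)
  next
    case after
    have "Y k x = Yinf k x" "Y (k - 1) x = Yinf (k - 1) x"
      using consistency_not_initiated[of _ x] mk x after order_trans[OF _ after] by auto
    moreover have "T x \<notin> enat ` {s..<k}" "T x \<notin> enat ` {s..<k - 1}" "T x \<notin> enat ` {m..<k}" "T x \<notin> enat ` {m..<k - 1}"
      using after by auto
    ultimately show ?thesis
      using after s order_trans[of "enat s" "enat k" "T x"] unfolding residuals blips
      by (auto simp: indicator_def)
  qed
qed

lemma parallel_trends_at_risk: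
  assumes mk: "m < k" "k \<le> K"
  defines "W \<equiv> \<lambda>x. Yinf k x - Yinf (k - 1) x"
  shows "AE x in M. enat m \<le> T x \<longrightarrow>
           condE_on M {x. enat m \<le> T x} (G m) W x = condE_on M {x. enat m < T x} (F m) W x"
proof -
  have m: "m \<le> K"
    using mk by simp
  interpret Gm: finite_measure_subalgebra M "G m"
    by (rule finite_measure_subalgebra_G[OF m])
  have W: "integrable M W"
    unfolding W_def using Yinf_integrable mk by auto
  have "AE x in M. x \<in> {x. enat m < T x} \<longrightarrow> real_cond_exp M (F m) (indicator {x. enat m < T x}) x \<noteq> 0"
    using cond_prob_not_initiated_pos[OF m] by eventually_elim auto
  then have coarsen: "AE x in M. x \<in> {x. enat m < T x} \<longrightarrow>
      condE_on M {x. enat m < T x} (G m) W x = condE_on M {x. enat m < T x} (F m) W x"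
    using G_agrees_with_F_on_not_initiated[OF m] subalgebra_G[OF m] subalgebra_G_F[OF m]
    by (intro finite_measure_subalgebra.condE_on_eq_coarser[OF finite_measure_subalgebra_F[OF m]]
          indicator_less_T_measurable_G[OF m] W) auto
  show ?thesis
    using Gm.condE_on_eq_real_cond_exp[OF indicator_le_T_measurable_G[OF m] W]
      Gm.condE_on_eq_real_cond_exp[OF indicator_T_eq_measurable_G[OF m] W]
      Gm.condE_on_eq_real_cond_exp[OF indicator_less_T_measurable_G[OF m] W]
      parallel_trends[OF mk] coarsen
    unfolding W_def by eventually_elim (auto simp: le_less)
qed

lemma star_prop_gstar:
  assumes mk: "m < k" "k \<le> K"
  shows "star_prop M Mz Z Y A T gstar m k"
proof -
  have m: "m \<le> K"
    using mk by simp
  interpret Fm: finite_measure_subalgebra M "F m"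
    by (rule finite_measure_subalgebra_F[OF m])
  interpret Gm: finite_measure_subalgebra M "G m"
    by (rule finite_measure_subalgebra_G[OF m])
  define W where "W x = Yinf k x - Yinf (k - 1) x" for x
  define R where "R s x = (\<Sum>j\<in>{s..<k}. blip_residual gstar j k x) - (\<Sum>j\<in>{s..<k - 1}. blip_residual gstar j (k - 1) x)" for s x
  have W: "integrable M W"
    unfolding W_def using Yinf_integrable mk by auto
  have D: "integrable M (Hc_increment gstar m k)"
    using integrable_Hc_increment[OF regular_blip_gstar mk(2)] .
  have decomposition: "indicator {x. enat s \<le> T x} x * Hc_increment gstar m k x - indicator {x. enat s \<le> T x} x * W x = R s x"
    if "x \<in> space M" "m \<le> s" "s \<le> k" for s x
    using indicator_mult_Hc_increment[OF that mk] unfolding W_def R_def by simp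
  have "cond_null M (G m) (R m)"
    unfolding R_def using mk subalgebra_G_mono[OF order_refl m] by (intro cond_null_blip_residual_sums) auto
  then have "cond_null M (G m) (\<lambda>x. indicator {x. enat m \<le> T x} x * Hc_increment gstar m k x - indicator {x. enat m \<le> T x} x * W x)"
    by (rule Gm.cond_null_cong) (use decomposition[of _ m] mk in simp)
  then have G_side: "AE x in M. condE_on M {x. enat m \<le> T x} (G m) (Hc_increment gstar m k) x
                              = condE_on M {x. enat m \<le> T x} (G m) W x"
    by (intro Gm.condE_on_cong_null D W measurable_from_subalg[OF subalgebra_G indicator_le_T_measurable_G] m)
  have "cond_null M (F m) (R (Suc m))"
    unfolding R_def using mk subalgebra_G_mono[of m "Suc m"] subalgebra_G_F[OF m]
    by (intro cond_null_blip_residual_sums) (auto simp: subalgebra_def)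
  then have "cond_null M (F m) (\<lambda>x. indicator {x. enat m < T x} x * Hc_increment gstar m k x - indicator {x. enat m < T x} x * W x)"
    by (rule Fm.cond_null_cong) (use decomposition[of _ "Suc m"] mk in \<open>simp add: Suc_ile_eq\<close>)
  then have F_side: "AE x in M. condE_on M {x. enat m < T x} (F m) (Hc_increment gstar m k) x
                              = condE_on M {x. enat m < T x} (F m) W x"
    by (intro Fm.condE_on_cong_null D W measurable_from_subalg[OF subalgebra_G indicator_less_T_measurable_G] m)
  show ?thesis
    using G_side F_side parallel_trends_at_risk[OF mk] unfolding star_prop_def W_def[symmetric]
    by eventually_elim simp
qed

lemma blip_unique:
  assumes regular: "regular_blip g" and star: "\<And>m k. m < k \<Longrightarrow> k \<le> K \<Longrightarrow> star_prop M Mz Z Y A T g m k"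
  shows "m < k \<Longrightarrow> k \<le> K \<Longrightarrow> AE x in M. T x = enat m \<longrightarrow> g m k (LA m x) = gstar m k (LA m x)"
proof (induction "k - m" arbitrary: m k rule: less_induct)
  case less
  show ?case
  proof (rule blip_eq_of_star_prop[OF regular regular_blip_gstar star star_prop_gstar])
    fix j l
    assume "j < l" "l \<le> K" "l - j < k - m"
    then show "AE x in M. T x = enat j \<longrightarrow> g j l (LA j x) = gstar j l (LA j x)"
      by (intro less.hyps)
  qed (use less.prems in auto)
qed

end

theorem lemma3:
  fixes M :: "'a measure" and Mz :: "'z measure" and K :: nat
    and Z :: "nat \<Rightarrow> 'a \<Rightarrow> 'z" and Y A Yinf :: "nat \<Rightarrow> 'a \<Rightarrow> real"
    and Ycf :: "nat \<Rightarrow> nat \<Rightarrow> real \<Rightarrow> 'a \<Rightarrow> real"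
    and gstar :: "nat \<Rightarrow> nat \<Rightarrow> ((nat \<Rightarrow> 'z) \<times> (nat \<Rightarrow> real) \<times> (nat \<Rightarrow> real)) \<times> real \<Rightarrow> real"
    and T :: "'a \<Rightarrow> enat"
  defines "T \<equiv> Tinit K A"
  assumes prob: "prob_space M"
    and Z_meas: "\<And>m. m \<le> K \<Longrightarrow> Z m \<in> measurable M Mz"
    and A_meas: "\<And>m. m \<le> K \<Longrightarrow> A m \<in> borel_measurable M"
    and Y_int: "\<And>k. k \<le> K \<Longrightarrow> integrable M (Y k)"
    and Yinf_int: "\<And>k. k \<le> K \<Longrightarrow> integrable M (Yinf k)"
    and Ycf_int: "\<And>m k. m < k \<Longrightarrow> k \<le> K \<Longrightarrow> integrable M (\<lambda>\<omega>. Ycf k m (A m \<omega>) \<omega>)"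
    and cons1: "\<And>k \<omega>. k \<le> K \<Longrightarrow> \<omega> \<in> space M \<Longrightarrow> T \<omega> < enat k \<Longrightarrow>
                  Y k \<omega> = Ycf k (the_enat (T \<omega>)) (A (the_enat (T \<omega>)) \<omega>) \<omega>"
    and cons2: "\<And>k \<omega>. k \<le> K \<Longrightarrow> \<omega> \<in> space M \<Longrightarrow> T \<omega> \<ge> enat k \<Longrightarrow> Y k \<omega> = Yinf k \<omega>"
    and cf_early: "\<And>k m a \<omega>. k \<le> m \<Longrightarrow> \<omega> \<in> space M \<Longrightarrow> Ycf k m a \<omega> = Yinf k \<omega>"
    and positivity: "\<And>m. m \<le> K \<Longrightarrow> AE \<omega> in M. T \<omega> \<ge> enat m \<longrightarrow>
                  condE_on M {x. T x \<ge> enat m} (sigL M Mz Z Y A m) (indicator {x. A m x = 0}) \<omega> > 0"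
    and parallel: "\<And>m k. m < k \<Longrightarrow> k \<le> K \<Longrightarrow> AE \<omega> in M. T \<omega> = enat m \<longrightarrow>
                  condE_on M {x. T x = enat m} (sigLA M Mz Z Y A m) (\<lambda>x. Yinf k x - Yinf (k - 1) x) \<omega>
                = condE_on M {x. T x > enat m} (sigL M Mz Z Y A m) (\<lambda>x. Yinf k x - Yinf (k - 1) x) \<omega>"
    and gstar_meas: "\<And>m k. m < k \<Longrightarrow> k \<le> K \<Longrightarrow> gstar m k \<in> borel_measurable (LM Mz m \<Otimes>\<^sub>M borel)"
    and gstar_blip: "\<And>m k. m < k \<Longrightarrow> k \<le> K \<Longrightarrow> AE \<omega> in M. T \<omega> = enat m \<longrightarrow>
                  gstar m k (Lbar Z Y A m \<omega>, A m \<omega>)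
                = condE_on M {x. T x = enat m} (sigLA M Mz Z Y A m) (\<lambda>x. Ycf k m (A m x) x - Yinf k x) \<omega>"
  shows "(\<forall>m k. m < k \<longrightarrow> k \<le> K \<longrightarrow> star_prop M Mz Z Y A T gstar m k)
       \<and> (\<forall>g. (\<forall>m k. m < k \<longrightarrow> k \<le> K \<longrightarrow>
                  g m k \<in> borel_measurable (LM Mz m \<Otimes>\<^sub>M borel)
                \<and> integrable M (\<lambda>\<omega>. g m k (Lbar Z Y A m \<omega>, A m \<omega>) * indicator {x. T x = enat m} \<omega>))
             \<longrightarrow> (\<forall>m k. m < k \<longrightarrow> k \<le> K \<longrightarrow> star_prop M Mz Z Y A T g m k)
             \<longrightarrow> (\<forall>m k. m < k \<longrightarrow> k \<le> K \<longrightarrow>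
                  (AE \<omega> in M. T \<omega> = enat m \<longrightarrow> g m k (Lbar Z Y A m \<omega>, A m \<omega>) = gstar m k (Lbar Z Y A m \<omega>, A m \<omega>))))"
proof -
  interpret coarse_blip_model M Mz K Z Y A T Yinf Ycf gstar
    using Z_meas A_meas Y_int Yinf_int Ycf_int cons1 cons2 positivity parallel gstar_meas gstar_blip
    by (intro coarse_blip_model.intro initiation_process.intro prob initiation_process_axioms.intro
          coarse_blip_model_axioms.intro) (simp_all add: T_def)
  show ?thesis
    by (intro conjI allI impI star_prop_gstar blip_unique) (auto simp: regular_blip_def)
qed

end
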